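(* Let $n\ge1$ and let $f$ be a function from the set of Schubert problems for $GL_n$ (triples $(u,v,w)\in S_n^3$ with $l(u)+l(v)+l(w)=\binom n2$) to $\mathbb Z$ satisfying: (1) (descent-cycling invariance) for every triple $(u,v,w)\in S_n^3$ with $l(u)+l(v)+l(w)=\binom n2-1$ and every $i\in\{1,\dots,n-1\}$ with $u(i)<u(i+1)$, $v(i)<v(i+1)$, $w(i)<w(i+1)$, one has $f(us_i,v,w)=f(u,vs_i,w)=f(u,v,ws_i)$; (2) $f(u,v,w)=0$ whenever there is $i$ with $u(i)<u(i+1)$, $v(i)<v(i+1)$ and $w(i)<w(i+1)$; (3) $f(\mathrm{id},\mathrm{id},w_0)=1$. Let $\pi,\sigma\in S_n$ with $l(\pi)+l(\sigma)=\binom n2$. Then $f(\pi,\mathrm{id},\sigma)=1$ if $\pi(m)=n+1-\sigma(m)$ for all $m$ (i.e. $\pi=w_0\sigma$), and $f(\pi,\mathrm{id},\sigma)=0$ otherwise.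
   Context: Permutations are in one-line notation; $l$ is the number of inversions; $w_0=n\,n{-}1\cdots1$ is the longest permutation; $\mathrm{id}$ is the identity; $us_i$ denotes $u$ with the entries in positions $i$ and $i+1$ swapped. *)

theory Defs
  imports "HOL-Combinatorics.Combinatorics"
begin

text \<open>Permutations of S_n are functions nat => nat permuting {1..n} (one-line notation u(1)...u(n)).\<close>

definition inv_len :: "nat \<Rightarrow> (nat \<Rightarrow> nat) \<Rightarrow> nat" where
  "inv_len n u = card {(i, j). 1 \<le> i \<and> i < j \<and> j \<le> n \<and> u j < u i}"

definition w0 :: "nat \<Rightarrow> nat \<Rightarrow> nat" where
  "w0 n = (\<lambda>m. if 1 \<le> m \<and> m \<le> n then n + 1 - m else m)"

definition rs :: "(nat \<Rightarrow> nat) \<Rightarrow> nat \<Rightarrow> nat \<Rightarrow> nat" where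
  "rs u i = u \<circ> Transposition.transpose i (i + 1)"

definition schubert_problem :: "nat \<Rightarrow> (nat \<Rightarrow> nat) \<Rightarrow> (nat \<Rightarrow> nat) \<Rightarrow> (nat \<Rightarrow> nat) \<Rightarrow> bool" where
  "schubert_problem n u v w \<longleftrightarrow> u permutes {1..n} \<and> v permutes {1..n} \<and> w permutes {1..n}
     \<and> inv_len n u + inv_len n v + inv_len n w = n choose 2"

end

theory Submission
  imports Defs
begin

text \<open>Induction on the length of \<pi>. If \<sigma> has an ascent at i, then either \<pi> has one too, and
  f vanishes there while \<pi> \<noteq> w0 \<sigma>; or \<pi> has a descent at i, and descent cycling moves s_i
  from \<pi> to \<sigma>, shortening \<pi> without changing whether \<pi> = w0 \<sigma>. If \<sigma> has no ascent at all,
  then \<sigma> = w0, so l(\<pi>) = 0, \<pi> = id and the value is the normalisation f(id, id, w0) = 1.\<close>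

lemma finite_increasing_pairs: "finite {(i, j). 1 \<le> i \<and> i < j \<and> j \<le> (n::nat) \<and> P i j}"
  by (rule finite_subset[of _ "{1..n} \<times> {1..n}"]) auto

lemma card_increasing_pairs: "card {(i, j). 1 \<le> i \<and> i < j \<and> j \<le> (n::nat)} = n choose 2"
proof (induction n)
  case 0
  have no_pairs: "{(i, j). 1 \<le> i \<and> i < j \<and> j \<le> (0::nat)} = {}"
    by auto
  show ?case
    unfolding no_pairs by simp
next
  case (Suc n)
  let ?P = "{(i, j). 1 \<le> i \<and> i < j \<and> j \<le> n}" and ?E = "(\<lambda>i. (i, Suc n)) ` {1..n}"
  have "card {(i, j). 1 \<le> i \<and> i < j \<and> j \<le> Suc n} = card (?P \<union> ?E)"
    by (rule arg_cong[where f = card]) auto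
  also have "\<dots> = card ?P + card ?E"
    by (rule card_Un_disjoint) (use finite_increasing_pairs[of n "\<lambda>_ _. True"] in auto)
  also have "\<dots> = (n choose 2) + n"
    using Suc.IH by (simp add: card_image inj_on_def)
  also have "\<dots> = Suc n choose 2"
    by (simp add: numeral_2_eq_2)
  finally show ?case .
qed

lemma inv_len_id: "inv_len n id = 0"
proof -
  have "{(i, j). 1 \<le> i \<and> i < j \<and> j \<le> n \<and> id j < id i} = {}"
    by auto
  then show ?thesis
    unfolding inv_len_def by (simp only: card.empty)
qed

lemma inv_len_w0: "inv_len n (w0 n) = n choose 2"
proof -
  have "{(i, j). 1 \<le> i \<and> i < j \<and> j \<le> n \<and> w0 n j < w0 n i} = {(i, j). 1 \<le> i \<and> i < j \<and> j \<le> n}"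
    by (auto simp: w0_def)
  then show ?thesis
    unfolding inv_len_def by (simp only: card_increasing_pairs)
qed

lemma rs_rs [simp]: "rs (rs u i) i = u"
  by (simp add: rs_def comp_assoc)

lemma rs_apply_left [simp]: "rs u i i = u (Suc i)"
  and rs_apply_right [simp]: "rs u i (Suc i) = u i"
  by (simp_all add: rs_def)

lemma rs_permutes: "u permutes {1..n} \<Longrightarrow> 1 \<le> i \<Longrightarrow> i < n \<Longrightarrow> rs u i permutes {1..n}"
  unfolding rs_def by (intro permutes_compose permutes_swap_id) auto

lemma inv_len_rs_ascent:
  assumes asc: "u i < u (Suc i)" and "1 \<le> i" "i < n"
  shows "inv_len n (rs u i) = Suc (inv_len n u)"
proof -
  define t where "t = Transposition.transpose i (Suc i)"
  define A where "A = {(a, b). 1 \<le> a \<and> a < b \<and> b \<le> n \<and> u b < u a}"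
  define B where "B = {(a, b). 1 \<le> a \<and> a < b \<and> b \<le> n \<and> u (t b) < u (t a)}"
  define h where "h = map_prod t t"
  have tt: "t (t x) = x" for x
    by (simp add: t_def)
  have t_less: "t a < t b" if "a < b" "(a, b) \<noteq> (i, Suc i)" for a b
    using that by (auto simp: t_def transpose_def)
  have t_range: "1 \<le> t a \<and> t a \<le> n" if "1 \<le> a" "a \<le> n" for a
    using that assms by (auto simp: t_def transpose_def)
  \<comment> \<open>relabelling by s_i maps the inversions of u bijectively onto those of u s_i other than (i, i+1)\<close>
  have "B = insert (i, Suc i) (h ` A)"
  proof (intro equalityI subsetI)
    fix p assume "p \<in> B"
    obtain a b where p: "p = (a, b)"
      by force
    show "p \<in> insert (i, Suc i) (h ` A)"
    proof (cases "p = (i, Suc i)")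
      case False
      then have "(t a, t b) \<in> A"
        using p \<open>p \<in> B\<close> t_less[of a b] t_range[of a] t_range[of b] by (auto simp: A_def B_def)
      moreover have "p = h (t a, t b)"
        by (simp add: h_def p tt)
      ultimately show ?thesis by blast
    qed simp
  next
    fix p assume "p \<in> insert (i, Suc i) (h ` A)"
    then show "p \<in> B"
    proof
      assume "p \<in> h ` A"
      then obtain a b where ab: "(a, b) \<in> A" "p = (t a, t b)"
        by (auto simp: h_def)
      moreover have "(a, b) \<noteq> (i, Suc i)"
        using ab asc by (auto simp: A_def)
      ultimately show ?thesis
        using t_less[of a b] t_range[of a] t_range[of b] by (auto simp: A_def B_def tt)
    qed (use assms in \<open>auto simp: B_def t_def\<close>)
  qed
  moreover have "(i, Suc i) \<notin> h ` A"
  proof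
    assume "(i, Suc i) \<in> h ` A"
    then obtain a b where "(a, b) \<in> A" "t a = i" "t b = Suc i"
      by (auto simp: h_def)
    moreover from this have "a = Suc i" "b = i"
      by (metis t_def tt transpose_apply_first transpose_apply_second)+
    ultimately show False by (auto simp: A_def)
  qed
  moreover have "inj h"
    unfolding h_def t_def by (intro prod.inj_map) (auto simp: inj_def transpose_eq_iff)
  ultimately have "card B = Suc (card A)"
    using finite_increasing_pairs[of n "\<lambda>a b. u b < u a"]
    by (simp add: A_def card_image inj_on_subset)
  then show ?thesis
    by (simp add: inv_len_def rs_def A_def B_def t_def)
qed

lemma increasing_self_map_fixes:
  fixes g :: "nat \<Rightarrow> nat"
  assumes ascent: "\<And>k. 1 \<le> k \<Longrightarrow> k < n \<Longrightarrow> g k < g (Suc k)"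
    and range: "\<And>k. 1 \<le> k \<Longrightarrow> k \<le> n \<Longrightarrow> 1 \<le> g k \<and> g k \<le> n"
    and m: "1 \<le> m" "m \<le> n"
  shows "g m = m"
proof -
  have gap: "g k + (j - k) \<le> g j" if "1 \<le> k" "k \<le> j" "j \<le> n" for k j
    using that(2,3)
  proof (induction j rule: dec_induct)
    case (step j)
    then show ?case
      using ascent[of j] that(1) by fastforce
  qed simp
  show ?thesis
    using gap[of 1 m] gap[of m n] range[of 1] range[of n] m by fastforce
qed

lemma permutes_no_descent_eq_id:
  assumes p: "p permutes {1..n}" and no_desc: "\<And>j. 1 \<le> j \<Longrightarrow> j < n \<Longrightarrow> \<not> p (Suc j) < p j"
  shows "p = id"
proof
  fix m
  have "p m = m" if "1 \<le> m" "m \<le> n"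
  proof (rule increasing_self_map_fixes[OF _ _ that])
    fix k assume "1 \<le> k" "k < n"
    moreover have "p k \<noteq> p (Suc k)"
      using permutes_inj[OF p] by (simp add: inj_eq)
    ultimately show "p k < p (Suc k)"
      using no_desc[of k] by simp
  qed (use permutes_in_image[OF p] in auto)
  then show "p m = id m"
    using permutes_not_in[OF p, of m] by fastforce
qed

lemma permutes_no_ascent_eq_w0:
  assumes s: "s permutes {1..n}" and no_asc: "\<And>j. 1 \<le> j \<Longrightarrow> j < n \<Longrightarrow> \<not> s j < s (Suc j)"
  shows "s = w0 n"
proof
  fix m
  have s_range: "1 \<le> s k \<and> s k \<le> n" if "1 \<le> k" "k \<le> n" for k
    using permutes_in_image[OF s] that by auto
  have "n + 1 - s m = m" if "1 \<le> m" "m \<le> n"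
  proof (rule increasing_self_map_fixes[where g = "\<lambda>k. n + 1 - s k", OF _ _ that])
    fix k assume k: "1 \<le> k" "k < n"
    moreover have "s k \<noteq> s (Suc k)"
      using permutes_inj[OF s] by (simp add: inj_eq)
    ultimately show "n + 1 - s k < n + 1 - s (Suc k)"
      using no_asc[of k] s_range[of k] by simp
  qed (use s_range in fastforce)
  then show "s m = w0 n m"
    using permutes_not_in[OF s, of m] s_range[of m] by (fastforce simp: w0_def)
qed

lemma inv_len_eq_0_imp_id:
  assumes p: "p permutes {1..n}" and "inv_len n p = 0"
  shows "p = id"
proof (rule permutes_no_descent_eq_id[OF p])
  fix j assume j: "1 \<le> j" "j < n"
  show "\<not> p (Suc j) < p j"
  proof
    assume "p (Suc j) < p j"
    then have "(j, Suc j) \<in> {(i, j). 1 \<le> i \<and> i < j \<and> j \<le> n \<and> p j < p i}"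
      using j by simp
    then show False
      using assms(2) finite_increasing_pairs[of n "\<lambda>i j. p j < p i"] by (auto simp: inv_len_def)
  qed
qed

lemma common_ascent_not_complementary:
  assumes "s (Suc j) \<le> n" "p j < p (Suc j)" "s j < s (Suc j)" "1 \<le> j" "j < n"
  shows "\<not> (\<forall>m\<in>{1..n}. p m = n + 1 - s m)"
proof
  assume "\<forall>m\<in>{1..n}. p m = n + 1 - s m"
  then have "p j = n + 1 - s j" "p (Suc j) = n + 1 - s (Suc j)"
    using assms by auto
  then show False
    using assms by arith
qed

lemma complementary_rs_iff:
  assumes "1 \<le> i" "i < n"
  shows "(\<forall>m\<in>{1..n}. rs p i m = n + 1 - rs s i m) \<longleftrightarrow> (\<forall>m\<in>{1..n}. p m = n + 1 - s m)"
proof -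
  define t where "t = Transposition.transpose i (Suc i)"
  have "(\<forall>m\<in>{1..n}. rs p i m = n + 1 - rs s i m) \<longleftrightarrow> (\<forall>m\<in>t ` {1..n}. p m = n + 1 - s m)"
    by (simp add: rs_def t_def)
  also have "t ` {1..n} = {1..n}"
    unfolding t_def using assms by (intro permutes_image permutes_swap_id) auto
  finally show ?thesis .
qed

locale descent_cycling =
  fixes n :: nat and f :: "(nat \<Rightarrow> nat) \<Rightarrow> (nat \<Rightarrow> nat) \<Rightarrow> (nat \<Rightarrow> nat) \<Rightarrow> int"
  assumes cycling: "\<And>u v w i. u permutes {1..n} \<Longrightarrow> v permutes {1..n} \<Longrightarrow> w permutes {1..n} \<Longrightarrow>
         inv_len n u + inv_len n v + inv_len n w + 1 = n choose 2 \<Longrightarrow>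
         1 \<le> i \<Longrightarrow> i \<le> n - 1 \<Longrightarrow> u i < u (i + 1) \<Longrightarrow> v i < v (i + 1) \<Longrightarrow> w i < w (i + 1) \<Longrightarrow>
         f (rs u i) v w = f u (rs v i) w \<and> f u (rs v i) w = f u v (rs w i)"
    and vanishing: "\<And>u v w i. schubert_problem n u v w \<Longrightarrow>
         1 \<le> i \<Longrightarrow> i \<le> n - 1 \<Longrightarrow> u i < u (i + 1) \<Longrightarrow> v i < v (i + 1) \<Longrightarrow> w i < w (i + 1) \<Longrightarrow>
         f u v w = 0"
    and normalised: "f id id (w0 n) = 1"
begin

lemma common_ascent_vanishing:
  assumes "p permutes {1..n}" "s permutes {1..n}" "inv_len n p + inv_len n s = n choose 2"
    and "1 \<le> j" "j < n" "p j < p (Suc j)" "s j < s (Suc j)"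
  shows "f p id s = 0"
  using assms by (intro vanishing[of p id s j]) (auto simp: schubert_problem_def inv_len_id)

lemma cycle_descent_left_to_right:
  assumes p: "p permutes {1..n}" and s: "s permutes {1..n}"
    and len: "inv_len n p + inv_len n s = n choose 2"
    and i: "1 \<le> i" "i < n" and "p (Suc i) < p i" "s i < s (Suc i)"
  shows "f p id s = f (rs p i) id (rs s i)"
proof -
  let ?u = "rs p i"
  have "inv_len n p = Suc (inv_len n ?u)"
    using inv_len_rs_ascent[of ?u i n] assms by simp
  then have "f (rs ?u i) id s = f ?u (rs id i) s \<and> f ?u (rs id i) s = f ?u id (rs s i)"
    using assms by (intro cycling rs_permutes) (auto simp: inv_len_id)
  then show ?thesis by simp
qed

lemma value_at_id_middle:
  assumes "p permutes {1..n}" "s permutes {1..n}" "inv_len n p + inv_len n s = n choose 2"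
  shows "f p id s = (if (\<forall>m\<in>{1..n}. p m = n + 1 - s m) then 1 else 0)"
  using assms
proof (induction "inv_len n p" arbitrary: p s rule: less_induct)
  case less
  note p = less.prems(1) and s = less.prems(2) and len = less.prems(3)
  show ?case
  proof (cases "\<exists>j. 1 \<le> j \<and> j < n \<and> s j < s (Suc j)")
    case True
    then obtain j where j: "1 \<le> j" "j < n" "s j < s (Suc j)" by blast
    have "p j \<noteq> p (Suc j)"
      using permutes_inj[OF p] by (simp add: inj_eq)
    then consider "p j < p (Suc j)" | "p (Suc j) < p j" by linarith
    then show ?thesis
    proof cases
      case 1
      moreover have "s (Suc j) \<le> n"
        using permutes_in_image[OF s, of "Suc j"] j by simp
      ultimately show ?thesis
        using common_ascent_vanishing[OF p s len j(1,2)] common_ascent_not_complementary j by simp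
    next
      case 2
      have shorter: "inv_len n p = Suc (inv_len n (rs p j))"
        using inv_len_rs_ascent[of "rs p j" j n] 2 j by simp
      have "f p id s = f (rs p j) id (rs s j)"
        using cycle_descent_left_to_right[OF p s len j(1,2) 2 j(3)] .
      also have "\<dots> = (if (\<forall>m\<in>{1..n}. rs p j m = n + 1 - rs s j m) then 1 else 0)"
        using shorter len inv_len_rs_ascent[of s j n] j
        by (intro less.hyps rs_permutes p s) auto
      finally show ?thesis
        by (simp only: complementary_rs_iff[OF j(1,2)])
    qed
  next
    case False
    then have "s = w0 n"
      by (intro permutes_no_ascent_eq_w0 s) auto
    moreover from this have "p = id"
      using len inv_len_w0[of n] by (intro inv_len_eq_0_imp_id[OF p]) simp
    ultimately show ?thesis
      using normalised by (simp add: w0_def)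
  qed
qed

end

theorem lemma4:
  fixes n :: nat and f :: "(nat \<Rightarrow> nat) \<Rightarrow> (nat \<Rightarrow> nat) \<Rightarrow> (nat \<Rightarrow> nat) \<Rightarrow> int"
  assumes n1: "n \<ge> 1"
    and cyc: "\<And>u v w i. u permutes {1..n} \<Longrightarrow> v permutes {1..n} \<Longrightarrow> w permutes {1..n} \<Longrightarrow>
         inv_len n u + inv_len n v + inv_len n w + 1 = n choose 2 \<Longrightarrow>
         1 \<le> i \<Longrightarrow> i \<le> n - 1 \<Longrightarrow> u i < u (i + 1) \<Longrightarrow> v i < v (i + 1) \<Longrightarrow> w i < w (i + 1) \<Longrightarrow>
         f (rs u i) v w = f u (rs v i) w \<and> f u (rs v i) w = f u v (rs w i)"
    and van: "\<And>u v w i. schubert_problem n u v w \<Longrightarrow>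
         1 \<le> i \<Longrightarrow> i \<le> n - 1 \<Longrightarrow> u i < u (i + 1) \<Longrightarrow> v i < v (i + 1) \<Longrightarrow> w i < w (i + 1) \<Longrightarrow>
         f u v w = 0"
    and norm: "f id id (w0 n) = 1"
    and pi: "\<pi> permutes {1..n}" and sigma: "\<sigma> permutes {1..n}"
    and len: "inv_len n \<pi> + inv_len n \<sigma> = n choose 2"
  shows "f \<pi> id \<sigma> = (if (\<forall>m\<in>{1..n}. \<pi> m = n + 1 - \<sigma> m) then 1 else 0)"
proof -
  interpret descent_cycling n f
    using cyc van norm by unfold_locales
  show ?thesis
    using pi sigma len by (rule value_at_id_middle)
qed

end
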